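(* (i) Let $\Phi:X_1\to\mathcal{CP}_{V,W}(Y_1)$ and $\Psi:X_2\to\mathcal{CP}_{W,U}(Y_2)$ be simplicial instruments. Then the levelwise-defined map $\Psi\circ\Phi:X_1\times X_2\to\mathcal{CP}_{V,U}(Y_1\times Y_2)$, given on $n$-simplices by $(\Psi\circ\Phi)_{(x_1,x_2)}^{(y_1,y_2)}=\Psi_{x_2}^{y_2}\circ\Phi_{x_1}^{y_1}$, is a map of simplicial sets. (ii) Let $\Phi:X\to\mathcal{CP}_{V_1,W_1}(Y)$ and $\Psi:Y\to\mathcal{CP}_{V_2,W_2}(Z)$ be simplicial instruments. Then the levelwise-defined map $\Psi\bullet\Phi:X\to\mathcal{CP}_{V_1\otimes V_2,W_1\otimes W_2}(Z)$, given for $x\in X_n$, $z\in Z_n$ by $(\Psi\bullet\Phi)_x^z=\sum_{y\in Y_n}\Phi_x^y\otimes\Psi_y^z$, is a map of simplicial sets.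
   Context: All Hilbert spaces are finite-dimensional; $\operatorname{CP}(V,W)$ is the set of completely positive maps $L(V)\to L(W)$ and $\operatorname{C}(V,W)$ the subset of channels (trace-preserving ones). For Hilbert spaces $V,W$ and a set $S$, $\mathcal{CP}_{V,W}(S)$ is the set of finitely supported functions $\Phi:S\to\operatorname{CP}(V,W)$, $s\mapsto\Phi^s$, with $\sum_{s}\Phi^s\in\operatorname{C}(V,W)$; for a function $f:S\to T$, $f_*:\mathcal{CP}_{V,W}(S)\to\mathcal{CP}_{V,W}(T)$ is $(f_*\Phi)^t=\sum_{s:f(s)=t}\Phi^s$. This functor is applied levelwise to simplicial sets (functors $\Delta^{\mathrm{op}}\to\mathsf{Set}$, with $\Delta$ the category of finite ordinals $[n]=\{0,\dots,n\}$ and order-preserving maps), so for a simplicial set $Y$ and $\theta:[k]\to[n]$, $\theta^*$ acts on $\mathcal{CP}_{V,W}(Y)_n=\mathcal{CP}_{V,W}(Y_n)$ as $(\theta^* )_*$. A simplicial instrument is a map of simplicial sets $\Phi:X\to\mathcal{CP}_{V,W}(Y)$; we write $\Phi_x^y$ for the value at $y\in Y_n$ of the image of $x\in X_n$. Products of simplicial sets are levelwise, and $L(V_1)\otimes L(V_2)\cong L(V_1\otimes V_2)$ via the Kronecker product. *)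

theory Defs
  imports "Jordan_Normal_Form.Matrix" Complex_Main
begin

text \<open>A finite-dimensional Hilbert space is modelled as C^d; L(C^d) is the set of
complex d x d matrices. A linear map L(C^dV) -> L(C^dW) is represented by a function on
matrices which is linear on carrier_mat dV dV, lands in carrier_mat dW dW, and is
(canonically) the zero matrix 0_m dW dW outside carrier_mat dV dV.\<close>

type_synonym superop = "complex mat \<Rightarrow> complex mat"

definition mtrace :: "nat \<Rightarrow> complex mat \<Rightarrow> complex" where
  "mtrace d M = (\<Sum>i<d. M $$ (i, i))"

definition psd :: "nat \<Rightarrow> complex mat \<Rightarrow> bool" where
  "psd d A \<longleftrightarrow> A \<in> carrier_mat d d \<and>
     (\<forall>v :: nat \<Rightarrow> complex.
        let q = (\<Sum>i<d. \<Sum>j<d. cnj (v i) * A $$ (i, j) * v j) in Re q \<ge> 0 \<and> Im q = 0)"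

definition is_superop :: "nat \<Rightarrow> nat \<Rightarrow> superop \<Rightarrow> bool" where
  "is_superop dV dW f \<longleftrightarrow>
     (\<forall>M. M \<notin> carrier_mat dV dV \<longrightarrow> f M = 0\<^sub>m dW dW) \<and>
     (\<forall>M \<in> carrier_mat dV dV. f M \<in> carrier_mat dW dW) \<and>
     (\<forall>M \<in> carrier_mat dV dV. \<forall>N \<in> carrier_mat dV dV. f (M + N) = f M + f N) \<and>
     (\<forall>M \<in> carrier_mat dV dV. \<forall>c. f (c \<cdot>\<^sub>m M) = c \<cdot>\<^sub>m f M)"

text \<open>The (a,b) block of size d of a block matrix (index convention of the Kronecker
product: row a*d + r).\<close>
definition block :: "nat \<Rightarrow> complex mat \<Rightarrow> nat \<Rightarrow> nat \<Rightarrow> complex mat" where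
  "block d M a b = mat d d (\<lambda>(r, c). M $$ (a * d + r, b * d + c))"

text \<open>id_{L(C^k)} tensor f, acting blockwise on (k*dV) x (k*dV) matrices.\<close>
definition ampl :: "nat \<Rightarrow> nat \<Rightarrow> nat \<Rightarrow> superop \<Rightarrow> superop" where
  "ampl k dV dW f M = mat (k * dW) (k * dW)
     (\<lambda>(i, j). f (block dV M (i div dW) (j div dW)) $$ (i mod dW, j mod dW))"

definition is_CP :: "nat \<Rightarrow> nat \<Rightarrow> superop \<Rightarrow> bool" where
  "is_CP dV dW f \<longleftrightarrow> is_superop dV dW f \<and>
     (\<forall>k. \<forall>M. psd (k * dV) M \<longrightarrow> psd (k * dW) (ampl k dV dW f M))"

definition is_channel :: "nat \<Rightarrow> nat \<Rightarrow> superop \<Rightarrow> bool" where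
  "is_channel dV dW f \<longleftrightarrow> is_CP dV dW f \<and>
     (\<forall>M \<in> carrier_mat dV dV. mtrace dW (f M) = mtrace dV M)"

definition zero_superop :: "nat \<Rightarrow> superop" where
  "zero_superop dW = (\<lambda>M. 0\<^sub>m dW dW)"

definition superop_sum :: "nat \<Rightarrow> ('s \<Rightarrow> superop) \<Rightarrow> 's set \<Rightarrow> superop" where
  "superop_sum dW F A = (\<lambda>M. mat dW dW (\<lambda>(i, j). \<Sum>a\<in>A. F a M $$ (i, j)))"

definition supp :: "nat \<Rightarrow> ('s \<Rightarrow> superop) \<Rightarrow> 's set" where
  "supp dW \<Phi> = {s. \<Phi> s \<noteq> zero_superop dW}"

text \<open>CP_{V,W}(S): finitely supported functions S -> CP(V,W) whose sum is a channel.
Outside its support (and in particular outside S) a function takes the value zero.\<close>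
definition CPfam :: "nat \<Rightarrow> nat \<Rightarrow> 's set \<Rightarrow> ('s \<Rightarrow> superop) set" where
  "CPfam dV dW S = {\<Phi>. finite (supp dW \<Phi>) \<and> supp dW \<Phi> \<subseteq> S \<and>
      (\<forall>s. is_CP dV dW (\<Phi> s)) \<and> is_channel dV dW (superop_sum dW \<Phi> (supp dW \<Phi>))}"

definition push :: "nat \<Rightarrow> ('s \<Rightarrow> 't) \<Rightarrow> ('s \<Rightarrow> superop) \<Rightarrow> ('t \<Rightarrow> superop)" where
  "push dW f \<Phi> = (\<lambda>t. superop_sum dW \<Phi> {s \<in> supp dW \<Phi>. f s = t})"

text \<open>Morphisms [k] -> [n] of the simplex category, as functions nat => nat
(only their values on {0..k} matter).\<close>
definition delta_mor :: "nat \<Rightarrow> nat \<Rightarrow> (nat \<Rightarrow> nat) \<Rightarrow> bool" where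
  "delta_mor k n \<theta> \<longleftrightarrow> (\<forall>i \<le> k. \<theta> i \<le> n) \<and> (\<forall>i j. i \<le> j \<longrightarrow> j \<le> k \<longrightarrow> \<theta> i \<le> \<theta> j)"

text \<open>A simplicial set is given by the sets of n-simplices Xs n and the actions
Xa \<theta> k n : X_n -> X_k of \<theta> : [k] -> [n] (i.e. \<theta>^* ), satisfying functoriality.\<close>
definition sset :: "(nat \<Rightarrow> 'a set) \<Rightarrow> ((nat \<Rightarrow> nat) \<Rightarrow> nat \<Rightarrow> nat \<Rightarrow> 'a \<Rightarrow> 'a) \<Rightarrow> bool" where
  "sset Xs Xa \<longleftrightarrow>
     (\<forall>k n \<theta> x. delta_mor k n \<theta> \<longrightarrow> x \<in> Xs n \<longrightarrow> Xa \<theta> k n x \<in> Xs k) \<and>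
     (\<forall>k n \<theta> \<theta>' x. delta_mor k n \<theta> \<longrightarrow> (\<forall>i \<le> k. \<theta> i = \<theta>' i) \<longrightarrow> x \<in> Xs n \<longrightarrow>
        Xa \<theta>' k n x = Xa \<theta> k n x) \<and>
     (\<forall>n x. x \<in> Xs n \<longrightarrow> Xa id n n x = x) \<and>
     (\<forall>j k n \<phi> \<theta> x. delta_mor j k \<phi> \<longrightarrow> delta_mor k n \<theta> \<longrightarrow> x \<in> Xs n \<longrightarrow>
        Xa (\<theta> \<circ> \<phi>) j n x = Xa \<phi> j k (Xa \<theta> k n x))"

definition sset_map ::
  "(nat \<Rightarrow> 'a set) \<Rightarrow> ((nat \<Rightarrow> nat) \<Rightarrow> nat \<Rightarrow> nat \<Rightarrow> 'a \<Rightarrow> 'a) \<Rightarrow>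
   (nat \<Rightarrow> 'b set) \<Rightarrow> ((nat \<Rightarrow> nat) \<Rightarrow> nat \<Rightarrow> nat \<Rightarrow> 'b \<Rightarrow> 'b) \<Rightarrow>
   (nat \<Rightarrow> 'a \<Rightarrow> 'b) \<Rightarrow> bool" where
  "sset_map Xs Xa Ys Ya F \<longleftrightarrow>
     (\<forall>n x. x \<in> Xs n \<longrightarrow> F n x \<in> Ys n) \<and>
     (\<forall>k n \<theta> x. delta_mor k n \<theta> \<longrightarrow> x \<in> Xs n \<longrightarrow> F k (Xa \<theta> k n x) = Ya \<theta> k n (F n x))"

definition prod_s :: "(nat \<Rightarrow> 'a set) \<Rightarrow> (nat \<Rightarrow> 'b set) \<Rightarrow> nat \<Rightarrow> ('a \<times> 'b) set" where
  "prod_s Xs1 Xs2 n = Xs1 n \<times> Xs2 n"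

definition prod_a ::
  "((nat \<Rightarrow> nat) \<Rightarrow> nat \<Rightarrow> nat \<Rightarrow> 'a \<Rightarrow> 'a) \<Rightarrow> ((nat \<Rightarrow> nat) \<Rightarrow> nat \<Rightarrow> nat \<Rightarrow> 'b \<Rightarrow> 'b) \<Rightarrow>
   (nat \<Rightarrow> nat) \<Rightarrow> nat \<Rightarrow> nat \<Rightarrow> 'a \<times> 'b \<Rightarrow> 'a \<times> 'b" where
  "prod_a Xa1 Xa2 \<theta> k n p = (Xa1 \<theta> k n (fst p), Xa2 \<theta> k n (snd p))"

definition CP_s :: "nat \<Rightarrow> nat \<Rightarrow> (nat \<Rightarrow> 'y set) \<Rightarrow> nat \<Rightarrow> ('y \<Rightarrow> superop) set" where
  "CP_s dV dW Ys n = CPfam dV dW (Ys n)"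

definition CP_a :: "nat \<Rightarrow> ((nat \<Rightarrow> nat) \<Rightarrow> nat \<Rightarrow> nat \<Rightarrow> 'y \<Rightarrow> 'y) \<Rightarrow>
   (nat \<Rightarrow> nat) \<Rightarrow> nat \<Rightarrow> nat \<Rightarrow> ('y \<Rightarrow> superop) \<Rightarrow> ('y \<Rightarrow> superop)" where
  "CP_a dW Ya \<theta> k n \<Phi> = push dW (Ya \<theta> k n) \<Phi>"

definition sinstr ::
  "nat \<Rightarrow> nat \<Rightarrow> (nat \<Rightarrow> 'x set) \<Rightarrow> ((nat \<Rightarrow> nat) \<Rightarrow> nat \<Rightarrow> nat \<Rightarrow> 'x \<Rightarrow> 'x) \<Rightarrow>
   (nat \<Rightarrow> 'y set) \<Rightarrow> ((nat \<Rightarrow> nat) \<Rightarrow> nat \<Rightarrow> nat \<Rightarrow> 'y \<Rightarrow> 'y) \<Rightarrow>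
   (nat \<Rightarrow> 'x \<Rightarrow> 'y \<Rightarrow> superop) \<Rightarrow> bool" where
  "sinstr dV dW Xs Xa Ys Ya \<Phi> \<longleftrightarrow> sset_map Xs Xa (CP_s dV dW Ys) (CP_a dW Ya) \<Phi>"

definition kron :: "nat \<Rightarrow> nat \<Rightarrow> complex mat \<Rightarrow> complex mat \<Rightarrow> complex mat" where
  "kron d1 d2 A B = mat (d1 * d2) (d1 * d2)
     (\<lambda>(i, j). A $$ (i div d2, j div d2) * B $$ (i mod d2, j mod d2))"

definition unit_mat :: "nat \<Rightarrow> nat \<Rightarrow> nat \<Rightarrow> complex mat" where
  "unit_mat d a b = mat d d (\<lambda>(r, c). if r = a \<and> c = b then 1 else 0)"

text \<open>f tensor g : L(V1 (x) V2) -> L(W1 (x) W2), the linear extension of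
A (x) B |-> f A (x) g B (under L(V1)(x)L(V2) = L(V1(x)V2) via Kronecker product).\<close>
definition tensor_superop :: "nat \<Rightarrow> nat \<Rightarrow> nat \<Rightarrow> nat \<Rightarrow> superop \<Rightarrow> superop \<Rightarrow> superop" where
  "tensor_superop dV1 dV2 dW1 dW2 f g = (\<lambda>M.
     if M \<in> carrier_mat (dV1 * dV2) (dV1 * dV2) then
       mat (dW1 * dW2) (dW1 * dW2) (\<lambda>(i, j).
         \<Sum>a<dV1. \<Sum>b<dV1. \<Sum>c<dV2. \<Sum>d<dV2.
           M $$ (a * dV2 + c, b * dV2 + d) *
           kron dW1 dW2 (f (unit_mat dV1 a b)) (g (unit_mat dV2 c d)) $$ (i, j))
     else 0\<^sub>m (dW1 * dW2) (dW1 * dW2))"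

definition seq_comp :: "(nat \<Rightarrow> 'x1 \<Rightarrow> 'y1 \<Rightarrow> superop) \<Rightarrow> (nat \<Rightarrow> 'x2 \<Rightarrow> 'y2 \<Rightarrow> superop) \<Rightarrow>
   nat \<Rightarrow> 'x1 \<times> 'x2 \<Rightarrow> 'y1 \<times> 'y2 \<Rightarrow> superop" where
  "seq_comp \<Phi> \<Psi> n x y = \<Psi> n (snd x) (snd y) \<circ> \<Phi> n (fst x) (fst y)"

definition bullet_comp :: "nat \<Rightarrow> nat \<Rightarrow> nat \<Rightarrow> nat \<Rightarrow> (nat \<Rightarrow> 'y set) \<Rightarrow>
   (nat \<Rightarrow> 'x \<Rightarrow> 'y \<Rightarrow> superop) \<Rightarrow> (nat \<Rightarrow> 'y \<Rightarrow> 'z \<Rightarrow> superop) \<Rightarrow>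
   nat \<Rightarrow> 'x \<Rightarrow> 'z \<Rightarrow> superop" where
  "bullet_comp dV1 dV2 dW1 dW2 Ys \<Phi> \<Psi> n x z =
     superop_sum (dW1 * dW2)
       (\<lambda>y. tensor_superop dV1 dV2 dW1 dW2 (\<Phi> n x y) (\<Psi> n y z))
       (Ys n \<inter> supp dW1 (\<Phi> n x))"

end

theory Submission
  imports Defs
begin

text \<open>Both composites are assembled pointwise from composition and tensor product of CP maps.
  Composition preserves complete positivity because amplification \<open>id\<^sub>k \<otimes> -\<close> is functorial.
  For the tensor product, \<open>id\<^sub>k \<otimes> (f \<otimes> g) = (id\<^sub>k \<otimes> f \<otimes> id) \<circ> (id\<^sub>k \<otimes> id \<otimes> g)\<close>, and the
  first factor is an amplification of \<open>f\<close> conjugated by a permutation of the basis.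
  Trace preservation is a Fubini argument: for \<open>\<Psi> \<circ> \<Phi>\<close> sum over the outcomes of \<open>\<Psi>\<close> first;
  for \<open>\<Psi> \<bullet> \<Phi>\<close> summing over the outcomes of \<open>\<Psi>\<close> leaves a channel on the second tensor factor,
  which acts under the trace as the partial trace, after which the channel \<open>\<Sigma>\<^sub>y \<Phi>\<^sup>y\<close> preserves
  the trace. Naturality is linearity: a simplicial operator acts on outcomes by pushforward, i.e.
  by summing over fibres, and composition and tensor product are bilinear, so the fibre sums can be
  regrouped; for \<open>\<Psi> \<bullet> \<Phi>\<close> this also uses the naturality of \<open>\<Psi>\<close>.\<close>

lemma mult_add_less: "a < m \<Longrightarrow> c < n \<Longrightarrow> a * n + c < m * (n::nat)"
proof -
  assume "a < m" "c < n"
  then have "a * n + c < (a + 1) * n" by simp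
  also have "\<dots> \<le> m * n" using \<open>a < m\<close> by (intro mult_right_mono) auto
  finally show ?thesis .
qed

lemma mod_less_of_less_mult: "i < k * (e::nat) \<Longrightarrow> i mod e < e"
  by (cases "e = 0") auto

lemma mod_mult2_div: "(i::nat) mod (a * b) div b = i div b mod a"
proof (cases "b = 0")
  case False
  have "i mod (a * b) = b * (i div b mod a) + i mod b" by (metis mod_mult2_eq mult.commute)
  then show ?thesis using False by simp
qed simp

lemma mod_mult2_mod: "(i::nat) mod (a * b) mod b = i mod b"
  by (simp add: mod_mod_cancel)

lemma sum_lessThan_mult_div_mod:
  "(\<Sum>i<m * n. h (i div n) (i mod n)) = (\<Sum>a<m. \<Sum>b<(n::nat). h a b)"
proof -
  have "(\<Sum>i<m * n. h (i div n) (i mod n)) = (\<Sum>a<m. \<Sum>i\<in>{a * n..<a * n + n}. h (i div n) (i mod n))"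
    by (rule sum.nat_group[symmetric])
  also have "\<dots> = (\<Sum>a<m. \<Sum>b<n. h a b)"
  proof (rule sum.cong[OF refl])
    fix a
    have "(\<Sum>i\<in>{a * n..<a * n + n}. h (i div n) (i mod n)) = (\<Sum>b\<in>{0..<n}. h ((b + a * n) div n) ((b + a * n) mod n))"
      using sum.shift_bounds_nat_ivl[of "\<lambda>i. h (i div n) (i mod n)" 0 "a * n" n] by (simp add: add.commute)
    also have "\<dots> = (\<Sum>b<n. h a b)"
      by (rule sum.cong) auto
    finally show "(\<Sum>i\<in>{a * n..<a * n + n}. h (i div n) (i mod n)) = (\<Sum>b<n. h a b)" .
  qed
  finally show ?thesis .
qed

lemma digits3_div_mod:
  assumes "r < D" "c < (q::nat)"
  shows "(a * (D * q) + r * q + c) div q = a * D + r" "(a * (D * q) + r * q + c) mod q = c"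
    "(a * (D * q) + r * q + c) div (D * q) = a"
proof -
  have "a * (D * q) + r * q + c = (a * D + r) * q + c" by (simp add: algebra_simps)
  then show "(a * (D * q) + r * q + c) div q = a * D + r" "(a * (D * q) + r * q + c) mod q = c"
    using assms by simp_all
  have "0 < D * q" using assms by simp
  then show "(a * (D * q) + r * q + c) div (D * q) = a"
    using mult_add_less[OF assms] by (simp add: add.assoc)
qed

lemma digits3_decompose: "(i::nat) = (i div (D * q)) * (D * q) + ((i div q) mod D) * q + i mod q"
proof -
  have "i = (i div q) * q + i mod q" by simp
  also have "i div q = (i div q div D) * D + (i div q) mod D" by simp
  also have "i div q div D = i div (D * q)" by (metis div_mult2_eq mult.commute)
  finally show ?thesis by (simp add: algebra_simps)
qed

lemma superop_carrier: "is_superop d e f \<Longrightarrow> f M \<in> carrier_mat e e"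
  unfolding is_superop_def by (cases "M \<in> carrier_mat d d") auto

lemma superop_outside: "is_superop d e f \<Longrightarrow> M \<notin> carrier_mat d d \<Longrightarrow> f M = 0\<^sub>m e e"
  unfolding is_superop_def by auto

lemma superop_dim [simp]:
  "is_superop d e f \<Longrightarrow> dim_row (f M) = e" "is_superop d e f \<Longrightarrow> dim_col (f M) = e"
  using superop_carrier by blast+

lemma superop_add:
  "is_superop d e f \<Longrightarrow> M \<in> carrier_mat d d \<Longrightarrow> N \<in> carrier_mat d d \<Longrightarrow> f (M + N) = f M + f N"
  unfolding is_superop_def by auto

lemma superop_smult: "is_superop d e f \<Longrightarrow> M \<in> carrier_mat d d \<Longrightarrow> f (c \<cdot>\<^sub>m M) = c \<cdot>\<^sub>m f M"
  unfolding is_superop_def by auto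

lemma superop_zero:
  assumes f: "is_superop d e f"
  shows "f (0\<^sub>m d d) = 0\<^sub>m e e"
proof -
  have "f (0\<^sub>m d d) = f (0 \<cdot>\<^sub>m 0\<^sub>m d d)" by (metis smult_zero_mat)
  also have "\<dots> = 0 \<cdot>\<^sub>m f (0\<^sub>m d d)" by (rule superop_smult[OF f]) simp
  also have "\<dots> = 0\<^sub>m e e" using superop_carrier[OF f, of "0\<^sub>m d d"] by (intro eq_matI) auto
  finally show ?thesis .
qed

lemma superop_linear_sum:
  assumes f: "is_superop d e f" and "finite A" and "\<And>a. a \<in> A \<Longrightarrow> N a \<in> carrier_mat d d"
  shows "f (mat d d (\<lambda>(i, j). \<Sum>a\<in>A. N a $$ (i, j))) = mat e e (\<lambda>(i, j). \<Sum>a\<in>A. f (N a) $$ (i, j))"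
  using assms(2,3)
proof (induction A rule: finite_induct)
  case empty
  have "mat d d (\<lambda>(i, j). \<Sum>a\<in>{}. N a $$ (i, j)) = 0\<^sub>m d d" by (rule eq_matI) auto
  moreover have "mat e e (\<lambda>(i, j). \<Sum>a\<in>{}. f (N a) $$ (i, j)) = 0\<^sub>m e e" by (rule eq_matI) auto
  ultimately show ?case using superop_zero[OF f] by (simp add: zero_mat_def)
next
  case (insert x F)
  let ?R = "mat d d (\<lambda>(i, j). \<Sum>a\<in>F. N a $$ (i, j))"
  have Nx: "N x \<in> carrier_mat d d" using insert by auto
  have "mat d d (\<lambda>(i, j). \<Sum>a\<in>insert x F. N a $$ (i, j)) = N x + ?R"
    using insert Nx by (intro eq_matI) auto
  then have "f (mat d d (\<lambda>(i, j). \<Sum>a\<in>insert x F. N a $$ (i, j))) = f (N x) + f ?R"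
    using superop_add[OF f Nx] by simp
  also have "f ?R = mat e e (\<lambda>(i, j). \<Sum>a\<in>F. f (N a) $$ (i, j))"
    by (rule insert.IH) (use insert.prems in auto)
  also have "f (N x) + \<dots> = mat e e (\<lambda>(i, j). \<Sum>a\<in>insert x F. f (N a) $$ (i, j))"
    using insert superop_carrier[OF f, of "N x"] by (intro eq_matI) auto
  finally show ?case .
qed

lemma unit_mat_carrier [simp]: "unit_mat d a b \<in> carrier_mat d d"
  unfolding unit_mat_def by simp

lemma superop_expand:
  assumes f: "is_superop d e f" and N: "N \<in> carrier_mat d d" and "i < e" "j < e"
  shows "f N $$ (i, j) = (\<Sum>a<d. \<Sum>b<d. N $$ (a, b) * f (unit_mat d a b) $$ (i, j))"
proof -
  let ?A = "{..<d} \<times> {..<d}"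
  let ?E = "\<lambda>p. N $$ p \<cdot>\<^sub>m unit_mat d (fst p) (snd p)"
  have "N = mat d d (\<lambda>(i, j). \<Sum>p\<in>?A. ?E p $$ (i, j))"
  proof (rule eq_matI)
    fix i j assume "i < dim_row (mat d d (\<lambda>(i, j). \<Sum>p\<in>?A. ?E p $$ (i, j)))"
      "j < dim_col (mat d d (\<lambda>(i, j). \<Sum>p\<in>?A. ?E p $$ (i, j)))"
    then have ij: "i < d" "j < d" by auto
    have "(\<Sum>p\<in>?A. ?E p $$ (i, j)) = (\<Sum>p\<in>?A. if p = (i, j) then N $$ (i, j) else 0)"
      using ij by (intro sum.cong) (auto simp: unit_mat_def)
    then show "N $$ (i, j) = mat d d (\<lambda>(i, j). \<Sum>p\<in>?A. ?E p $$ (i, j)) $$ (i, j)"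
      using ij by simp
  qed (use N in auto)
  then have "f N $$ (i, j) = (\<Sum>p\<in>?A. f (?E p) $$ (i, j))"
    using superop_linear_sum[OF f, of ?A ?E] assms(3,4) by simp
  also have "\<dots> = (\<Sum>p\<in>?A. N $$ p * f (unit_mat d (fst p) (snd p)) $$ (i, j))"
    using assms(3,4) by (intro sum.cong) (auto simp: superop_smult[OF f] superop_dim[OF f])
  also have "\<dots> = (\<Sum>a<d. \<Sum>b<d. N $$ (a, b) * f (unit_mat d a b) $$ (i, j))"
    by (simp add: sum.cartesian_product split_def)
  finally show ?thesis .
qed

lemma mtrace_unit_mat: "a < d \<Longrightarrow> b < d \<Longrightarrow> mtrace d (unit_mat d a b) = (if a = b then 1 else 0)"
  unfolding mtrace_def unit_mat_def by (auto intro!: sum.neutral)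

lemma mtrace_superop_expand:
  assumes "is_superop d e f" "N \<in> carrier_mat d d"
  shows "mtrace e (f N) = (\<Sum>a<d. \<Sum>b<d. N $$ (a, b) * mtrace e (f (unit_mat d a b)))"
  unfolding mtrace_def using superop_expand[OF assms]
  by (simp add: sum_distrib_left sum.swap[of _ "{..<e}"])

lemma superop_sum_index [simp]:
  "i < e \<Longrightarrow> j < e \<Longrightarrow> superop_sum e F A M $$ (i, j) = (\<Sum>a\<in>A. F a M $$ (i, j))"
  unfolding superop_sum_def by simp

lemma superop_sum_carrier [simp]: "superop_sum e F A M \<in> carrier_mat e e"
  unfolding superop_sum_def by simp

lemma superop_sum_dim [simp]:
  "dim_row (superop_sum e F A M) = e" "dim_col (superop_sum e F A M) = e"
  unfolding superop_sum_def by simp_all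

lemma is_superop_superop_sum:
  assumes F: "\<And>a. a \<in> A \<Longrightarrow> is_superop d e (F a)"
  shows "is_superop d e (superop_sum e F A)"
  unfolding is_superop_def
proof (intro conjI ballI allI impI)
  fix M :: "complex mat" assume "M \<notin> carrier_mat d d"
  then show "superop_sum e F A M = 0\<^sub>m e e"
    by (intro eq_matI) (auto simp: superop_outside[OF F] intro!: sum.neutral)
next
  fix M N :: "complex mat" assume "M \<in> carrier_mat d d" "N \<in> carrier_mat d d"
  then show "superop_sum e F A (M + N) = superop_sum e F A M + superop_sum e F A N"
    by (intro eq_matI)
      (auto simp: superop_add[OF F] superop_dim[OF F] sum.distrib[symmetric] intro!: sum.cong)
next
  fix M :: "complex mat" and c assume "M \<in> carrier_mat d d"
  then show "superop_sum e F A (c \<cdot>\<^sub>m M) = c \<cdot>\<^sub>m superop_sum e F A M"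
    by (intro eq_matI)
      (auto simp: superop_smult[OF F] superop_dim[OF F] sum_distrib_left intro!: sum.cong)
qed simp

lemma superop_sum_cong: "(\<And>a. a \<in> A \<Longrightarrow> F a = G a) \<Longrightarrow> superop_sum e F A = superop_sum e G A"
  unfolding superop_sum_def by simp

lemma superop_sum_empty [simp]: "superop_sum e F {} = zero_superop e"
  unfolding superop_sum_def zero_superop_def by (intro ext eq_matI) auto

lemma superop_sum_zero [simp]: "superop_sum e (\<lambda>a. zero_superop e) A = zero_superop e"
  unfolding superop_sum_def zero_superop_def by (intro ext eq_matI) auto

lemma superop_sum_mono_neutral:
  assumes "finite B" "A \<subseteq> B" "\<And>b. b \<in> B - A \<Longrightarrow> F b = zero_superop e"
  shows "superop_sum e F A = superop_sum e F B"
  unfolding superop_sum_def using assms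
  by (intro ext eq_matI) (auto intro!: sum.mono_neutral_left simp: zero_superop_def)

lemma superop_sum_swap:
  "superop_sum e (\<lambda>a. superop_sum e (F a) B) A = superop_sum e (\<lambda>b. superop_sum e (\<lambda>a. F a b) A) B"
  by (intro ext eq_matI) (auto intro: sum.swap)

lemma superop_sum_group:
  assumes "finite A"
  shows "superop_sum e (\<lambda>t. superop_sum e F {a \<in> A. f a = t}) (f ` A) = superop_sum e F A"
  using sum.group[OF assms finite_imageI[OF assms] subset_refl] by (intro ext eq_matI) auto

lemma mtrace_superop_sum: "mtrace e (superop_sum e F A M) = (\<Sum>a\<in>A. mtrace e (F a M))"
  unfolding mtrace_def by (simp add: sum.swap[of _ A])

lemma not_in_supp: "s \<notin> supp e \<Phi> \<Longrightarrow> \<Phi> s = zero_superop e"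
  unfolding supp_def by simp

lemma superop_sum_supp:
  "finite A \<Longrightarrow> supp e F \<subseteq> A \<Longrightarrow> superop_sum e F (supp e F) = superop_sum e F A"
  by (rule superop_sum_mono_neutral) (auto intro: not_in_supp)

lemma push_eq_superop_sum:
  assumes "finite A" "supp e \<Phi> \<subseteq> A"
  shows "push e f \<Phi> t = superop_sum e \<Phi> {s \<in> A. f s = t}"
  unfolding push_def using assms by (intro superop_sum_mono_neutral) (auto intro: not_in_supp)

lemma supp_push: "supp e (push e f \<Phi>) \<subseteq> f ` supp e \<Phi>"
proof
  fix t assume t: "t \<in> supp e (push e f \<Phi>)"
  show "t \<in> f ` supp e \<Phi>"
  proof (rule ccontr)
    assume "t \<notin> f ` supp e \<Phi>"
    then have fibre: "{s \<in> supp e \<Phi>. f s = t} = {}" by auto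
    have "push e f \<Phi> t = zero_superop e" unfolding push_def fibre by simp
    then show False using t unfolding supp_def by simp
  qed
qed

section \<open>Complete positivity\<close>

definition quad_form :: "nat \<Rightarrow> complex mat \<Rightarrow> (nat \<Rightarrow> complex) \<Rightarrow> complex" where
  "quad_form n A v = (\<Sum>i<n. \<Sum>j<n. cnj (v i) * A $$ (i, j) * v j)"

lemma psd_iff_quad_form:
  "psd n A \<longleftrightarrow> A \<in> carrier_mat n n \<and> (\<forall>v. Re (quad_form n A v) \<ge> 0 \<and> Im (quad_form n A v) = 0)"
  unfolding psd_def quad_form_def Let_def by simp

lemma quad_form_sum:
  "quad_form n (mat n n (\<lambda>(i, j). \<Sum>a\<in>A. P a $$ (i, j))) v = (\<Sum>a\<in>A. quad_form n (P a) v)"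
proof -
  have "quad_form n (mat n n (\<lambda>(i, j). \<Sum>a\<in>A. P a $$ (i, j))) v =
      (\<Sum>i<n. \<Sum>j<n. \<Sum>a\<in>A. cnj (v i) * P a $$ (i, j) * v j)"
    unfolding quad_form_def by (intro sum.cong refl) (simp add: sum_distrib_left sum_distrib_right)
  then show ?thesis
    unfolding quad_form_def by (simp add: sum.swap[of _ A])
qed

lemma psd_sum:
  assumes "\<And>a. a \<in> A \<Longrightarrow> psd n (P a)"
  shows "psd n (mat n n (\<lambda>(i, j). \<Sum>a\<in>A. P a $$ (i, j)))"
  using assms unfolding psd_iff_quad_form quad_form_sum
  by (auto simp: Re_sum Im_sum intro: sum_nonneg)

definition reindex_mat :: "nat \<Rightarrow> (nat \<Rightarrow> nat) \<Rightarrow> complex mat \<Rightarrow> complex mat" where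
  "reindex_mat n \<rho> A = mat n n (\<lambda>(i, j). A $$ (\<rho> i, \<rho> j))"

lemma psd_reindex_mat:
  assumes A: "psd n A" and \<rho>: "bij_betw \<rho> {..<n} {..<n}"
  shows "psd n (reindex_mat n \<rho> A)"
  unfolding psd_iff_quad_form
proof (intro conjI allI)
  fix v :: "nat \<Rightarrow> complex"
  define u where "u = v \<circ> inv_into {..<n} \<rho>"
  have u: "u (\<rho> i) = v i" if "i < n" for i
    using that \<rho> unfolding u_def by (simp add: bij_betw_def inv_into_f_f)
  have "quad_form n (reindex_mat n \<rho> A) v = (\<Sum>i<n. \<Sum>j<n. cnj (u (\<rho> i)) * A $$ (\<rho> i, \<rho> j) * u (\<rho> j))"
    unfolding quad_form_def reindex_mat_def by (intro sum.cong refl) (simp add: u)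
  also have "\<dots> = quad_form n A u"
    unfolding quad_form_def
    using sum.reindex_bij_betw[OF \<rho>, of "\<lambda>i. \<Sum>j<n. cnj (u i) * A $$ (i, j) * u j"]
      sum.reindex_bij_betw[OF \<rho>, of "\<lambda>j. cnj (u (\<rho> _)) * A $$ (\<rho> _, j) * u j"]
    by simp
  finally show "Re (quad_form n (reindex_mat n \<rho> A) v) \<ge> 0" "Im (quad_form n (reindex_mat n \<rho> A) v) = 0"
    using A by (simp_all add: psd_iff_quad_form)
qed (simp add: reindex_mat_def)

lemma ampl_index [simp]:
  "i < k * e \<Longrightarrow> j < k * e \<Longrightarrow>
    ampl k d e f M $$ (i, j) = f (block d M (i div e) (j div e)) $$ (i mod e, j mod e)"
  unfolding ampl_def by simp

lemma ampl_dim [simp]: "dim_row (ampl k d e f M) = k * e" "dim_col (ampl k d e f M) = k * e"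
  unfolding ampl_def by simp_all

lemma block_carrier [simp]: "block d M a b \<in> carrier_mat d d"
  unfolding block_def by simp

lemma block_index: "r < d \<Longrightarrow> s < d \<Longrightarrow> block d M a b $$ (r, s) = M $$ (a * d + r, b * d + s)"
  unfolding block_def by simp

lemma ampl_superop_sum:
  "ampl k d e (superop_sum e F A) M = mat (k * e) (k * e) (\<lambda>(i, j). \<Sum>a\<in>A. ampl k d e (F a) M $$ (i, j))"
  by (rule eq_matI) (auto simp: mod_less_of_less_mult)

lemma block_ampl:
  assumes f: "is_superop d e f" and "a < k" "b < k"
  shows "block e (ampl k d e f M) a b = f (block d M a b)"
  using assms mult_add_less[OF \<open>a < k\<close>] mult_add_less[OF \<open>b < k\<close>]
  by (intro eq_matI) (auto simp: block_def)

lemma ampl_comp: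
  assumes "is_superop d e f"
  shows "ampl k d g (h \<circ> f) M = ampl k e g h (ampl k d e f M)"
  by (rule eq_matI) (auto simp: block_ampl[OF assms] less_mult_imp_div_less)

lemma is_superop_comp:
  assumes f: "is_superop d e f" and h: "is_superop e g h"
  shows "is_superop d g (h \<circ> f)"
  unfolding is_superop_def
  using superop_outside[OF f] superop_zero[OF h] superop_carrier[OF f] superop_carrier[OF h]
    superop_add[OF f] superop_add[OF h] superop_smult[OF f] superop_smult[OF h]
  by auto

lemma is_CP_superop: "is_CP d e f \<Longrightarrow> is_superop d e f"
  unfolding is_CP_def by simp

lemma is_CP_comp: "is_CP d e f \<Longrightarrow> is_CP e g h \<Longrightarrow> is_CP d g (h \<circ> f)"
  using is_superop_comp ampl_comp unfolding is_CP_def by metis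

lemma is_CP_superop_sum:
  assumes "\<And>a. a \<in> A \<Longrightarrow> is_CP d e (F a)"
  shows "is_CP d e (superop_sum e F A)"
  using assms unfolding is_CP_def ampl_superop_sum
  by (auto intro: is_superop_superop_sum psd_sum)

lemma CPfamD:
  assumes "\<Phi> \<in> CPfam dV dW S"
  shows "finite (supp dW \<Phi>)" "supp dW \<Phi> \<subseteq> S" "is_CP dV dW (\<Phi> s)"
    "is_channel dV dW (superop_sum dW \<Phi> (supp dW \<Phi>))"
  using assms unfolding CPfam_def by auto

lemma CPfam_trace:
  assumes \<Phi>: "\<Phi> \<in> CPfam dV dW S" and "finite A" "supp dW \<Phi> \<subseteq> A" "M \<in> carrier_mat dV dV"
  shows "(\<Sum>s\<in>A. mtrace dW (\<Phi> s M)) = mtrace dV M"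
proof -
  have "(\<Sum>s\<in>A. mtrace dW (\<Phi> s M)) = mtrace dW (superop_sum dW \<Phi> (supp dW \<Phi>) M)"
    using assms(2,3) by (simp add: superop_sum_supp mtrace_superop_sum)
  also have "\<dots> = mtrace dV M"
    using CPfamD(4)[OF \<Phi>] assms(4) unfolding is_channel_def by blast
  finally show ?thesis .
qed

lemma CPfamI:
  assumes "finite A" "supp dW \<Phi> \<subseteq> A" "A \<subseteq> S" "\<And>s. is_CP dV dW (\<Phi> s)"
    and "\<And>M. M \<in> carrier_mat dV dV \<Longrightarrow> (\<Sum>s\<in>A. mtrace dW (\<Phi> s M)) = mtrace dV M"
  shows "\<Phi> \<in> CPfam dV dW S"
proof -
  have total: "superop_sum dW \<Phi> (supp dW \<Phi>) = superop_sum dW \<Phi> A"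
    using assms(1,2) by (rule superop_sum_supp)
  show ?thesis
    unfolding CPfam_def mem_Collect_eq is_channel_def total using assms finite_subset[OF assms(2,1)]
    by (auto simp: mtrace_superop_sum intro: is_CP_superop_sum)
qed

lemma sinstr_CPfam: "sinstr dV dW Xs Xa Ys Ya \<Phi> \<Longrightarrow> x \<in> Xs n \<Longrightarrow> \<Phi> n x \<in> CPfam dV dW (Ys n)"
  unfolding sinstr_def sset_map_def CP_s_def by auto

lemma sinstr_natural:
  "sinstr dV dW Xs Xa Ys Ya \<Phi> \<Longrightarrow> delta_mor k n \<theta> \<Longrightarrow> x \<in> Xs n \<Longrightarrow>
    \<Phi> k (Xa \<theta> k n x) = push dW (Ya \<theta> k n) (\<Phi> n x)"
  unfolding sinstr_def sset_map_def CP_a_def by auto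

section \<open>Sequential composition\<close>

definition fam_comp :: "('s1 \<Rightarrow> superop) \<Rightarrow> ('s2 \<Rightarrow> superop) \<Rightarrow> 's1 \<times> 's2 \<Rightarrow> superop" where
  "fam_comp P Q y = Q (snd y) \<circ> P (fst y)"

lemma superop_sum_comp:
  assumes "finite A" "\<And>a. a \<in> A \<Longrightarrow> is_superop d e (P a)" "\<And>b. b \<in> B \<Longrightarrow> is_superop e g (Q b)"
  shows "superop_sum g Q B \<circ> superop_sum e P A = superop_sum g (fam_comp P Q) (A \<times> B)"
proof
  fix M
  have Q_sum: "Q b (superop_sum e P A M) = mat g g (\<lambda>(i, j). \<Sum>a\<in>A. Q b (P a M) $$ (i, j))"
    if "b \<in> B" for b
    unfolding superop_sum_def using assms that superop_carrier[OF assms(2)]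
    by (intro superop_linear_sum) auto
  show "(superop_sum g Q B \<circ> superop_sum e P A) M = superop_sum g (fam_comp P Q) (A \<times> B) M"
  proof (rule eq_matI)
    fix i j assume "i < dim_row (superop_sum g (fam_comp P Q) (A \<times> B) M)"
      "j < dim_col (superop_sum g (fam_comp P Q) (A \<times> B) M)"
    then show "(superop_sum g Q B \<circ> superop_sum e P A) M $$ (i, j) =
        superop_sum g (fam_comp P Q) (A \<times> B) M $$ (i, j)"
      by (simp add: Q_sum fam_comp_def sum.cartesian_product' sum.swap[of _ B])
  qed auto
qed

lemma supp_fam_comp:
  assumes "\<And>b. is_superop dW dU (Q b)"
  shows "supp dU (fam_comp P Q) \<subseteq> supp dW P \<times> supp dU Q"
proof
  fix y assume y: "y \<in> supp dU (fam_comp P Q)"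
  show "y \<in> supp dW P \<times> supp dU Q"
  proof (rule ccontr)
    assume "y \<notin> supp dW P \<times> supp dU Q"
    then have "fam_comp P Q y = zero_superop dU"
      using not_in_supp[of "fst y" dW P] not_in_supp[of "snd y" dU Q] superop_zero[OF assms]
      by (cases y) (auto simp: fam_comp_def zero_superop_def)
    then show False using y unfolding supp_def by simp
  qed
qed

lemma CPfam_fam_comp:
  assumes P: "P \<in> CPfam dV dW S1" and Q: "Q \<in> CPfam dW dU S2"
  shows "fam_comp P Q \<in> CPfam dV dU (S1 \<times> S2)"
proof (rule CPfamI)
  let ?A = "supp dW P \<times> supp dU Q"
  show "finite ?A" using CPfamD(1)[OF P] CPfamD(1)[OF Q] by simp
  show "supp dU (fam_comp P Q) \<subseteq> ?A" by (rule supp_fam_comp) (rule is_CP_superop[OF CPfamD(3)[OF Q]])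
  show "?A \<subseteq> S1 \<times> S2" using CPfamD(2)[OF P] CPfamD(2)[OF Q] by auto
  show "is_CP dV dU (fam_comp P Q s)" for s
    unfolding fam_comp_def by (rule is_CP_comp[OF CPfamD(3)[OF P] CPfamD(3)[OF Q]])
  fix M :: "complex mat" assume M: "M \<in> carrier_mat dV dV"
  have "(\<Sum>s\<in>?A. mtrace dU (fam_comp P Q s M)) = (\<Sum>a\<in>supp dW P. \<Sum>b\<in>supp dU Q. mtrace dU (Q b (P a M)))"
    by (simp add: fam_comp_def sum.cartesian_product split_def)
  also have "\<dots> = (\<Sum>a\<in>supp dW P. mtrace dW (P a M))"
    using CPfam_trace[OF Q CPfamD(1)[OF Q] subset_refl]
      superop_carrier[OF is_CP_superop[OF CPfamD(3)[OF P]]] by simp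
  also have "\<dots> = mtrace dV M"
    using CPfam_trace[OF P CPfamD(1)[OF P] subset_refl M] .
  finally show "(\<Sum>s\<in>?A. mtrace dU (fam_comp P Q s M)) = mtrace dV M" .
qed

lemma push_fam_comp:
  fixes f1 :: "'s1 \<Rightarrow> 't1" and f2 :: "'s2 \<Rightarrow> 't2"
  assumes P: "P \<in> CPfam dV dW S1" and Q: "Q \<in> CPfam dW dU S2"
  shows "fam_comp (push dW f1 P) (push dU f2 Q) = push dU (map_prod f1 f2) (fam_comp P Q)"
proof
  fix t :: "'t1 \<times> 't2"
  let ?A = "supp dW P \<times> supp dU Q"
  define A1 where "A1 = {s \<in> supp dW P. f1 s = fst t}"
  define A2 where "A2 = {s \<in> supp dU Q. f2 s = snd t}"
  have A: "finite ?A" using CPfamD(1)[OF P] CPfamD(1)[OF Q] by simp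
  have "fam_comp (push dW f1 P) (push dU f2 Q) t = superop_sum dU Q A2 \<circ> superop_sum dW P A1"
    unfolding fam_comp_def push_def A1_def A2_def ..
  also have "\<dots> = superop_sum dU (fam_comp P Q) (A1 \<times> A2)"
    using CPfamD(1)[OF P] is_CP_superop[OF CPfamD(3)[OF P]] is_CP_superop[OF CPfamD(3)[OF Q]]
    by (intro superop_sum_comp) (auto simp: A1_def)
  also have "A1 \<times> A2 = {s \<in> ?A. map_prod f1 f2 s = t}"
    unfolding A1_def A2_def by (cases t) auto
  also have "superop_sum dU (fam_comp P Q) \<dots> = push dU (map_prod f1 f2) (fam_comp P Q) t"
    using A supp_fam_comp[OF is_CP_superop[OF CPfamD(3)[OF Q]]]
    by (intro push_eq_superop_sum[symmetric])
  finally show "fam_comp (push dW f1 P) (push dU f2 Q) t = push dU (map_prod f1 f2) (fam_comp P Q) t" .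
qed

lemma seq_comp_sset_map:
  assumes \<Phi>: "sinstr dV dW X1s X1a Y1s Y1a \<Phi>" and \<Psi>: "sinstr dW dU X2s X2a Y2s Y2a \<Psi>"
  shows "sset_map (prod_s X1s X2s) (prod_a X1a X2a)
    (CP_s dV dU (prod_s Y1s Y2s)) (CP_a dU (prod_a Y1a Y2a)) (seq_comp \<Phi> \<Psi>)"
proof -
  have seq_comp: "seq_comp \<Phi> \<Psi> n x = fam_comp (\<Phi> n (fst x)) (\<Psi> n (snd x))" for n x
    unfolding seq_comp_def fam_comp_def ..
  have prod_a: "prod_a Y1a Y2a \<theta> k n = map_prod (Y1a \<theta> k n) (Y2a \<theta> k n)" for \<theta> k n
    unfolding prod_a_def by (auto simp: map_prod_def split_def)
  show ?thesis
    unfolding sset_map_def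
  proof (intro conjI allI impI)
    fix n x assume "x \<in> prod_s X1s X2s n"
    then show "seq_comp \<Phi> \<Psi> n x \<in> CP_s dV dU (prod_s Y1s Y2s) n"
      unfolding seq_comp CP_s_def prod_s_def
      using CPfam_fam_comp[OF sinstr_CPfam[OF \<Phi>] sinstr_CPfam[OF \<Psi>]] by auto
  next
    fix k n \<theta> x assume \<theta>: "delta_mor k n \<theta>" and "x \<in> prod_s X1s X2s n"
    then have x: "fst x \<in> X1s n" "snd x \<in> X2s n" unfolding prod_s_def by auto
    show "seq_comp \<Phi> \<Psi> k (prod_a X1a X2a \<theta> k n x) = CP_a dU (prod_a Y1a Y2a) \<theta> k n (seq_comp \<Phi> \<Psi> n x)"
      unfolding seq_comp CP_a_def prod_a
      by (simp add: prod_a_def sinstr_natural[OF \<Phi> \<theta> x(1)] sinstr_natural[OF \<Psi> \<theta> x(2)]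
          push_fam_comp[OF sinstr_CPfam[OF \<Phi> x(1)] sinstr_CPfam[OF \<Psi> x(2)]])
  qed
qed

lemma tensor_superop_index:
  assumes "M \<in> carrier_mat (dV1 * dV2) (dV1 * dV2)" "i < dW1 * dW2" "j < dW1 * dW2"
  shows "tensor_superop dV1 dV2 dW1 dW2 f g M $$ (i, j) =
    (\<Sum>a<dV1. \<Sum>b<dV1. \<Sum>c<dV2. \<Sum>d<dV2. M $$ (a * dV2 + c, b * dV2 + d) *
      (f (unit_mat dV1 a b) $$ (i div dW2, j div dW2) * g (unit_mat dV2 c d) $$ (i mod dW2, j mod dW2)))"
  unfolding tensor_superop_def kron_def using assms by simp

lemma tensor_superop_carrier [simp]:
  "tensor_superop dV1 dV2 dW1 dW2 f g M \<in> carrier_mat (dW1 * dW2) (dW1 * dW2)"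
  unfolding tensor_superop_def by simp

lemma tensor_superop_dim [simp]:
  "dim_row (tensor_superop dV1 dV2 dW1 dW2 f g M) = dW1 * dW2"
  "dim_col (tensor_superop dV1 dV2 dW1 dW2 f g M) = dW1 * dW2"
  unfolding tensor_superop_def by simp_all

lemma tensor_superop_outside:
  "M \<notin> carrier_mat (dV1 * dV2) (dV1 * dV2) \<Longrightarrow>
    tensor_superop dV1 dV2 dW1 dW2 f g M = 0\<^sub>m (dW1 * dW2) (dW1 * dW2)"
  unfolding tensor_superop_def by simp

lemma is_superop_tensor_superop: "is_superop (dV1 * dV2) (dW1 * dW2) (tensor_superop dV1 dV2 dW1 dW2 f g)"
  unfolding is_superop_def
proof (intro conjI ballI allI impI)
  fix M N :: "complex mat"
  assume M: "M \<in> carrier_mat (dV1 * dV2) (dV1 * dV2)" and N: "N \<in> carrier_mat (dV1 * dV2) (dV1 * dV2)"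
  then show "tensor_superop dV1 dV2 dW1 dW2 f g (M + N) =
      tensor_superop dV1 dV2 dW1 dW2 f g M + tensor_superop dV1 dV2 dW1 dW2 f g N"
    using carrier_matD[OF M] carrier_matD[OF N]
    by (intro eq_matI) (simp_all add: tensor_superop_index sum.distrib[symmetric] distrib_right
        mult_add_less cong: sum.cong_simp)
next
  fix M :: "complex mat" and c assume M: "M \<in> carrier_mat (dV1 * dV2) (dV1 * dV2)"
  then show "tensor_superop dV1 dV2 dW1 dW2 f g (c \<cdot>\<^sub>m M) = c \<cdot>\<^sub>m tensor_superop dV1 dV2 dW1 dW2 f g M"
    by (intro eq_matI) (simp_all add: tensor_superop_index sum_distrib_left mult.assoc mult_add_less
        cong: sum.cong_simp)
qed (simp_all add: tensor_superop_outside)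

lemma tensor_superop_sum_left:
  "tensor_superop dV1 dV2 dW1 dW2 (superop_sum dW1 F A) g =
    superop_sum (dW1 * dW2) (\<lambda>a. tensor_superop dV1 dV2 dW1 dW2 (F a) g) A"
proof
  fix M :: "complex mat"
  show "tensor_superop dV1 dV2 dW1 dW2 (superop_sum dW1 F A) g M =
      superop_sum (dW1 * dW2) (\<lambda>a. tensor_superop dV1 dV2 dW1 dW2 (F a) g) A M"
  proof (cases "M \<in> carrier_mat (dV1 * dV2) (dV1 * dV2)")
    case True
    then show ?thesis
      by (intro eq_matI) (simp_all add: tensor_superop_index less_mult_imp_div_less
          sum_distrib_left sum_distrib_right sum.swap[of _ A])
  qed (intro eq_matI, simp_all add: tensor_superop_outside)
qed

lemma tensor_superop_sum_right:
  "tensor_superop dV1 dV2 dW1 dW2 f (superop_sum dW2 G A) =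
    superop_sum (dW1 * dW2) (\<lambda>a. tensor_superop dV1 dV2 dW1 dW2 f (G a)) A"
proof
  fix M :: "complex mat"
  show "tensor_superop dV1 dV2 dW1 dW2 f (superop_sum dW2 G A) M =
      superop_sum (dW1 * dW2) (\<lambda>a. tensor_superop dV1 dV2 dW1 dW2 f (G a)) A M"
  proof (cases "M \<in> carrier_mat (dV1 * dV2) (dV1 * dV2)")
    case True
    then show ?thesis
      by (intro eq_matI) (simp_all add: tensor_superop_index mod_less_of_less_mult
          sum_distrib_left sum_distrib_right sum.swap[of _ A])
  qed (intro eq_matI, simp_all add: tensor_superop_outside)
qed

lemma tensor_superop_zero_left:
  "tensor_superop dV1 dV2 dW1 dW2 (zero_superop dW1) g = zero_superop (dW1 * dW2)"
  using tensor_superop_sum_left[of dV1 dV2 dW1 dW2 _ "{}" g] by simp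

lemma tensor_superop_zero_right:
  "tensor_superop dV1 dV2 dW1 dW2 f (zero_superop dW2) = zero_superop (dW1 * dW2)"
  using tensor_superop_sum_right[of dV1 dV2 dW1 dW2 f _ "{}"] by simp

definition ptrace_right :: "nat \<Rightarrow> nat \<Rightarrow> complex mat \<Rightarrow> complex mat" where
  "ptrace_right d1 d2 M = mat d1 d1 (\<lambda>(a, b). \<Sum>c<d2. M $$ (a * d2 + c, b * d2 + c))"

lemma mtrace_ptrace_right: "mtrace d1 (ptrace_right d1 d2 M) = mtrace (d1 * d2) M"
  unfolding mtrace_def ptrace_right_def
  using sum_lessThan_mult_div_mod[where h = "\<lambda>a c. M $$ (a * d2 + c, a * d2 + c)" and m = d1 and n = d2]
  by simp

lemma mtrace_tensor_superop:
  assumes "M \<in> carrier_mat (dV1 * dV2) (dV1 * dV2)"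
  shows "mtrace (dW1 * dW2) (tensor_superop dV1 dV2 dW1 dW2 f g M) =
    (\<Sum>a<dV1. \<Sum>b<dV1. \<Sum>c<dV2. \<Sum>d<dV2. M $$ (a * dV2 + c, b * dV2 + d) *
      (mtrace dW1 (f (unit_mat dV1 a b)) * mtrace dW2 (g (unit_mat dV2 c d))))"
proof -
  define F where "F a b x = f (unit_mat dV1 a b) $$ (x, x)" for a b x
  define G where "G c d y = g (unit_mat dV2 c d) $$ (y, y)" for c d y
  have "mtrace (dW1 * dW2) (tensor_superop dV1 dV2 dW1 dW2 f g M) =
      (\<Sum>i<dW1 * dW2. \<Sum>a<dV1. \<Sum>b<dV1. \<Sum>c<dV2. \<Sum>d<dV2.
        M $$ (a * dV2 + c, b * dV2 + d) * (F a b (i div dW2) * G c d (i mod dW2)))"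
    unfolding mtrace_def F_def G_def by (intro sum.cong refl) (simp add: tensor_superop_index[OF assms])
  also have "\<dots> = (\<Sum>a<dV1. \<Sum>b<dV1. \<Sum>c<dV2. \<Sum>d<dV2. M $$ (a * dV2 + c, b * dV2 + d) *
      (\<Sum>i<dW1 * dW2. F a b (i div dW2) * G c d (i mod dW2)))"
    by (simp only: sum.swap[of _ "{..<dW1 * dW2}"] sum_distrib_left)
  also have "\<dots> = (\<Sum>a<dV1. \<Sum>b<dV1. \<Sum>c<dV2. \<Sum>d<dV2. M $$ (a * dV2 + c, b * dV2 + d) *
      (mtrace dW1 (f (unit_mat dV1 a b)) * mtrace dW2 (g (unit_mat dV2 c d))))"
  proof -
    have "(\<Sum>i<dW1 * dW2. F a b (i div dW2) * G c d (i mod dW2)) =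
        mtrace dW1 (f (unit_mat dV1 a b)) * mtrace dW2 (g (unit_mat dV2 c d))" for a b c d
      using sum_lessThan_mult_div_mod[where h = "\<lambda>x y. F a b x * G c d y"]
      by (simp add: mtrace_def F_def G_def sum_product)
    then show ?thesis by (simp only:)
  qed
  finally show ?thesis .
qed

lemma mtrace_tensor_superop_channel:
  assumes f: "is_superop dV1 dW1 f" and g: "is_channel dV2 dW2 g"
    and M: "M \<in> carrier_mat (dV1 * dV2) (dV1 * dV2)"
  shows "mtrace (dW1 * dW2) (tensor_superop dV1 dV2 dW1 dW2 f g M) = mtrace dW1 (f (ptrace_right dV1 dV2 M))"
proof -
  have "mtrace (dW1 * dW2) (tensor_superop dV1 dV2 dW1 dW2 f g M) =
      (\<Sum>a<dV1. \<Sum>b<dV1. \<Sum>c<dV2. \<Sum>d<dV2. M $$ (a * dV2 + c, b * dV2 + d) *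
        (mtrace dW1 (f (unit_mat dV1 a b)) * (if c = d then 1 else 0)))"
    using g unfolding mtrace_tensor_superop[OF M] is_channel_def
    by (intro sum.cong refl) (simp add: mtrace_unit_mat)
  also have "\<dots> = (\<Sum>a<dV1. \<Sum>b<dV1. ptrace_right dV1 dV2 M $$ (a, b) * mtrace dW1 (f (unit_mat dV1 a b)))"
    unfolding ptrace_right_def by (simp add: sum_distrib_right if_distrib cong: if_cong)
  also have "\<dots> = mtrace dW1 (f (ptrace_right dV1 dV2 M))"
    by (rule mtrace_superop_expand[OF f, symmetric]) (simp add: ptrace_right_def)
  finally show ?thesis .
qed

section \<open>Complete positivity of tensor products\<close>

text \<open>Write an index below \<open>p * D * q\<close> as \<open>a * (D * q) + r * q + c\<close> with \<open>r < D\<close>, \<open>c < q\<close>;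
  \<open>mid_to_last D q\<close> sends it to \<open>(a * q + c) * D + r\<close>, and \<open>last_to_mid D q\<close> is its inverse.\<close>

definition mid_to_last :: "nat \<Rightarrow> nat \<Rightarrow> nat \<Rightarrow> nat" where
  "mid_to_last D q i = ((i div (D * q)) * q + i mod q) * D + (i div q) mod D"

definition last_to_mid :: "nat \<Rightarrow> nat \<Rightarrow> nat \<Rightarrow> nat" where
  "last_to_mid D q i = (i div D div q) * (D * q) + (i mod D) * q + (i div D) mod q"

lemma mid_to_last_last_to_mid: "0 < D \<Longrightarrow> 0 < q \<Longrightarrow> mid_to_last D q (last_to_mid D q i) = i"
  unfolding last_to_mid_def mid_to_last_def
  by (simp add: digits3_div_mod mult.commute[of "i div D div q" q])

lemma last_to_mid_mid_to_last: "0 < D \<Longrightarrow> 0 < q \<Longrightarrow> last_to_mid D q (mid_to_last D q i) = i"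
  unfolding last_to_mid_def mid_to_last_def using digits3_decompose[of i D q] by simp

lemma mid_to_last_less:
  assumes "i < p * D * q"
  shows "mid_to_last D q i < p * D * q"
proof -
  have "0 < D" "0 < q" using assms by (auto intro: gr0I)
  moreover have "i div (D * q) < p" using assms by (simp add: less_mult_imp_div_less mult.assoc)
  ultimately have "(i div (D * q)) * q + i mod q < p * q" by (intro mult_add_less) auto
  from mult_add_less[OF this, of "(i div q) mod D" D] \<open>0 < D\<close> show ?thesis
    unfolding mid_to_last_def by (simp add: ac_simps)
qed

lemma last_to_mid_less:
  assumes "i < p * D * q"
  shows "last_to_mid D q i < p * D * q"
proof -
  have "0 < D" "0 < q" using assms by (auto intro: gr0I)
  moreover have "i div D div q < p" using assms by (simp add: less_mult_imp_div_less ac_simps)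
  ultimately have "(i div D div q) * (D * q) + ((i mod D) * q + (i div D) mod q) < p * (D * q)"
    by (intro mult_add_less) auto
  then show ?thesis unfolding last_to_mid_def by (simp add: ac_simps)
qed

lemma bij_mid_to_last: "bij_betw (mid_to_last D q) {..<p * D * q} {..<p * D * q}"
  by (rule bij_betw_byWitness[where f' = "last_to_mid D q"])
    (auto intro!: mid_to_last_less last_to_mid_less last_to_mid_mid_to_last mid_to_last_last_to_mid
      intro: gr0I)

lemma bij_last_to_mid: "bij_betw (last_to_mid D q) {..<p * D * q} {..<p * D * q}"
  by (rule bij_betw_byWitness[where f' = "mid_to_last D q"])
    (auto intro!: mid_to_last_less last_to_mid_less last_to_mid_mid_to_last mid_to_last_last_to_mid
      intro: gr0I)

text \<open>\<open>ampl_mid p q dV dW f\<close> is \<open>id\<^sub>p \<otimes> f \<otimes> id\<^sub>q\<close>: it moves the middle tensor factor to the end,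
  applies \<open>id\<^sub>p\<^sub>q \<otimes> f\<close> there, and moves the factor back.\<close>

definition ampl_mid :: "nat \<Rightarrow> nat \<Rightarrow> nat \<Rightarrow> nat \<Rightarrow> superop \<Rightarrow> superop" where
  "ampl_mid p q dV dW f M = reindex_mat (p * dW * q) (mid_to_last dW q)
     (ampl (p * q) dV dW f (reindex_mat (p * dV * q) (last_to_mid dV q) M))"

lemma psd_ampl_mid:
  assumes f: "is_CP dV dW f" and M: "psd (p * dV * q) M"
  shows "psd (p * dW * q) (ampl_mid p q dV dW f M)"
proof -
  have dims: "p * dV * q = (p * q) * dV" "p * dW * q = (p * q) * dW" by simp_all
  have "psd ((p * q) * dV) (reindex_mat (p * dV * q) (last_to_mid dV q) M)"
    using psd_reindex_mat[OF M bij_last_to_mid] by (simp only: dims)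
  then have "psd ((p * q) * dW) (ampl (p * q) dV dW f (reindex_mat (p * dV * q) (last_to_mid dV q) M))"
    using f unfolding is_CP_def by blast
  then have "psd (p * dW * q) (ampl (p * q) dV dW f (reindex_mat (p * dV * q) (last_to_mid dV q) M))"
    by (simp only: dims)
  then show ?thesis
    unfolding ampl_mid_def by (rule psd_reindex_mat[OF _ bij_mid_to_last])
qed

lemma ampl_mid_index:
  assumes ij: "i < p * dW * q" "j < p * dW * q"
  shows "ampl_mid p q dV dW f M $$ (i, j) =
    f (mat dV dV (\<lambda>(r, s). M $$ ((i div (dW * q)) * (dV * q) + r * q + i mod q,
                                 (j div (dW * q)) * (dV * q) + s * q + j mod q)))
      $$ ((i div q) mod dW, (j div q) mod dW)"
proof -
  have "0 < dW" "0 < q" using ij by (auto intro: gr0I)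
  have idx: "mid_to_last dW q i div dW = (i div (dW * q)) * q + i mod q"
      "mid_to_last dW q i mod dW = (i div q) mod dW"
      "mid_to_last dW q j div dW = (j div (dW * q)) * q + j mod q"
      "mid_to_last dW q j mod dW = (j div q) mod dW"
    unfolding mid_to_last_def using \<open>0 < dW\<close> by simp_all
  have outer: "(i div (dW * q)) * q + i mod q < p * q" "(j div (dW * q)) * q + j mod q < p * q"
    using ij \<open>0 < q\<close> by (auto intro!: mult_add_less simp: less_mult_imp_div_less mult.assoc)
  have last_to_mid: "last_to_mid dV q ((a * q + c) * dV + r) = a * (dV * q) + r * q + c"
    if "r < dV" "c < q" for a c r
    unfolding last_to_mid_def using that by simp
  have bound: "x * dV + r < p * dV * q" if "x < p * q" "r < dV" for x r
    using mult_add_less[OF that] by (simp add: ac_simps)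
  have "block dV (reindex_mat (p * dV * q) (last_to_mid dV q) M)
      (mid_to_last dW q i div dW) (mid_to_last dW q j div dW) =
    mat dV dV (\<lambda>(r, s). M $$ ((i div (dW * q)) * (dV * q) + r * q + i mod q,
                              (j div (dW * q)) * (dV * q) + s * q + j mod q))"
    unfolding idx using outer \<open>0 < q\<close>
    by (intro eq_matI) (auto simp: block_def reindex_mat_def last_to_mid bound)
  then show ?thesis
    using ij mid_to_last_less[OF ij(1)] mid_to_last_less[OF ij(2)]
    unfolding ampl_mid_def by (simp add: reindex_mat_def idx ac_simps)
qed

lemma ampl_index_digits3:
  assumes "a < k" "b < k" "r < dV" "s < dV" "c < dW" "d < dW"
  shows "ampl (k * dV) dV' dW g M $$ (a * (dV * dW) + r * dW + c, b * (dV * dW) + s * dW + d) =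
    g (block dV' M (a * dV + r) (b * dV + s)) $$ (c, d)"
proof -
  have "a * (dV * dW) + r * dW + c < (k * dV) * dW" "b * (dV * dW) + s * dW + d < (k * dV) * dW"
    using mult_add_less[OF mult_add_less[OF \<open>a < k\<close> \<open>r < dV\<close>] \<open>c < dW\<close>]
      mult_add_less[OF mult_add_less[OF \<open>b < k\<close> \<open>s < dV\<close>] \<open>d < dW\<close>]
    by (simp_all add: algebra_simps)
  then show ?thesis using assms by (simp add: digits3_div_mod)
qed

lemma ampl_tensor_superop_index:
  assumes "i < k * (dW1 * dW2)" "j < k * (dW1 * dW2)"
  shows "ampl k (dV1 * dV2) (dW1 * dW2) (tensor_superop dV1 dV2 dW1 dW2 f g) M $$ (i, j) =
    (\<Sum>a<dV1. \<Sum>b<dV1. \<Sum>c<dV2. \<Sum>d<dV2.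
      M $$ ((i div (dW1 * dW2) * dV1 + a) * dV2 + c, (j div (dW1 * dW2) * dV1 + b) * dV2 + d) *
      (f (unit_mat dV1 a b) $$ (i div dW2 mod dW1, j div dW2 mod dW1) *
       g (unit_mat dV2 c d) $$ (i mod dW2, j mod dW2)))"
proof -
  have block: "block (dV1 * dV2) M a0 b0 $$ (a * dV2 + c, b * dV2 + d) =
      M $$ ((a0 * dV1 + a) * dV2 + c, (b0 * dV1 + b) * dV2 + d)"
    if "a < dV1" "b < dV1" "c < dV2" "d < dV2" for a0 b0 a b c d
    using that mult_add_less[of a dV1 c dV2] mult_add_less[of b dV1 d dV2]
    by (simp add: block_index algebra_simps)
  show ?thesis
    using assms mod_less_of_less_mult[OF assms(1)] mod_less_of_less_mult[OF assms(2)]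
    by (simp add: tensor_superop_index mod_mult2_div mod_mult2_mod block cong: sum.cong_simp)
qed

lemma ampl_tensor_superop:
  assumes f: "is_superop dV1 dW1 f" and g: "is_superop dV2 dW2 g"
  shows "ampl k (dV1 * dV2) (dW1 * dW2) (tensor_superop dV1 dV2 dW1 dW2 f g) M =
    ampl_mid k dW2 dV1 dW1 f (ampl (k * dV1) dV2 dW2 g M)"
proof (rule eq_matI)
  fix i j assume "i < dim_row (ampl_mid k dW2 dV1 dW1 f (ampl (k * dV1) dV2 dW2 g M))"
    "j < dim_col (ampl_mid k dW2 dV1 dW1 f (ampl (k * dV1) dV2 dW2 g M))"
  then have ij: "i < k * (dW1 * dW2)" "j < k * (dW1 * dW2)"
    by (auto simp: ampl_mid_def reindex_mat_def ac_simps)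
  define a0 b0 where "a0 = i div (dW1 * dW2)" and "b0 = j div (dW1 * dW2)"
  define F where "F r s = f (unit_mat dV1 r s) $$ (i div dW2 mod dW1, j div dW2 mod dW1)" for r s
  define G where "G c d = g (unit_mat dV2 c d) $$ (i mod dW2, j mod dW2)" for c d
  have pos: "0 < dW1" "0 < dW2" "a0 < k" "b0 < k"
    using ij by (auto simp: a0_def b0_def less_mult_imp_div_less intro: gr0I)
  define X where "X = mat dV1 dV1 (\<lambda>(r, s). ampl (k * dV1) dV2 dW2 g M $$
      (a0 * (dV1 * dW2) + r * dW2 + i mod dW2, b0 * (dV1 * dW2) + s * dW2 + j mod dW2))"
  have X: "X $$ (r, s) = (\<Sum>c<dV2. \<Sum>d<dV2. M $$ ((a0 * dV1 + r) * dV2 + c, (b0 * dV1 + s) * dV2 + d) * G c d)"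
    if "r < dV1" "s < dV1" for r s
    using that pos
    by (simp add: X_def ampl_index_digits3 superop_expand[OF g] block_index G_def)
  have "ampl_mid k dW2 dV1 dW1 f (ampl (k * dV1) dV2 dW2 g M) $$ (i, j) =
      f X $$ (i div dW2 mod dW1, j div dW2 mod dW1)"
    using ij by (simp add: ampl_mid_index X_def a0_def b0_def ac_simps)
  also have "\<dots> = (\<Sum>r<dV1. \<Sum>s<dV1. X $$ (r, s) * F r s)"
    unfolding F_def using pos by (intro superop_expand[OF f]) (auto simp: X_def)
  also have "\<dots> = (\<Sum>a<dV1. \<Sum>b<dV1. \<Sum>c<dV2. \<Sum>d<dV2.
      M $$ ((a0 * dV1 + a) * dV2 + c, (b0 * dV1 + b) * dV2 + d) * (F a b * G c d))"
    by (simp add: X sum_distrib_left sum_distrib_right ac_simps)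
  also have "\<dots> = ampl k (dV1 * dV2) (dW1 * dW2) (tensor_superop dV1 dV2 dW1 dW2 f g) M $$ (i, j)"
    unfolding ampl_tensor_superop_index[OF ij] a0_def b0_def F_def G_def ..
  finally show "ampl k (dV1 * dV2) (dW1 * dW2) (tensor_superop dV1 dV2 dW1 dW2 f g) M $$ (i, j) =
      ampl_mid k dW2 dV1 dW1 f (ampl (k * dV1) dV2 dW2 g M) $$ (i, j)" ..
qed (auto simp: ampl_mid_def reindex_mat_def ac_simps)

lemma is_CP_tensor_superop:
  assumes f: "is_CP dV1 dW1 f" and g: "is_CP dV2 dW2 g"
  shows "is_CP (dV1 * dV2) (dW1 * dW2) (tensor_superop dV1 dV2 dW1 dW2 f g)"
  unfolding is_CP_def
proof (intro conjI allI impI)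
  fix k M assume "psd (k * (dV1 * dV2)) M"
  then have "psd ((k * dV1) * dV2) M" by (simp add: ac_simps)
  then have "psd ((k * dV1) * dW2) (ampl (k * dV1) dV2 dW2 g M)"
    using g unfolding is_CP_def by blast
  from psd_ampl_mid[OF f this]
  show "psd (k * (dW1 * dW2)) (ampl k (dV1 * dV2) (dW1 * dW2) (tensor_superop dV1 dV2 dW1 dW2 f g) M)"
    unfolding ampl_tensor_superop[OF is_CP_superop[OF f] is_CP_superop[OF g]] by (simp add: mult.assoc)
qed (rule is_superop_tensor_superop)

section \<open>Parallel composition\<close>

definition fam_tensor :: "nat \<Rightarrow> nat \<Rightarrow> nat \<Rightarrow> nat \<Rightarrow>
    ('y \<Rightarrow> superop) \<Rightarrow> ('y \<Rightarrow> 'z \<Rightarrow> superop) \<Rightarrow> 'z \<Rightarrow> superop" where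
  "fam_tensor dV1 dV2 dW1 dW2 P Q z =
     superop_sum (dW1 * dW2) (\<lambda>y. tensor_superop dV1 dV2 dW1 dW2 (P y) (Q y z)) (supp dW1 P)"

lemma bullet_comp_eq_fam_tensor:
  assumes "\<Phi> n x \<in> CPfam dV1 dW1 (Ys n)"
  shows "bullet_comp dV1 dV2 dW1 dW2 Ys \<Phi> \<Psi> n x = fam_tensor dV1 dV2 dW1 dW2 (\<Phi> n x) (\<Psi> n)"
  using Int_absorb1[OF CPfamD(2)[OF assms]] unfolding bullet_comp_def fam_tensor_def by simp

lemma supp_fam_tensor:
  "supp (dW1 * dW2) (fam_tensor dV1 dV2 dW1 dW2 P Q) \<subseteq> (\<Union>y\<in>supp dW1 P. supp dW2 (Q y))"
proof
  fix z assume z: "z \<in> supp (dW1 * dW2) (fam_tensor dV1 dV2 dW1 dW2 P Q)"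
  show "z \<in> (\<Union>y\<in>supp dW1 P. supp dW2 (Q y))"
  proof (rule ccontr)
    assume "z \<notin> (\<Union>y\<in>supp dW1 P. supp dW2 (Q y))"
    then have "Q y z = zero_superop dW2" if "y \<in> supp dW1 P" for y
      using that by (blast intro: not_in_supp)
    then have "fam_tensor dV1 dV2 dW1 dW2 P Q z = superop_sum (dW1 * dW2) (\<lambda>y. zero_superop (dW1 * dW2)) (supp dW1 P)"
      unfolding fam_tensor_def by (intro superop_sum_cong) (simp add: tensor_superop_zero_right)
    then show False using z unfolding supp_def by simp
  qed
qed

lemma CPfam_fam_tensor:
  assumes P: "P \<in> CPfam dV1 dW1 S" and Q: "\<And>y. y \<in> S \<Longrightarrow> Q y \<in> CPfam dV2 dW2 Z"
  shows "fam_tensor dV1 dV2 dW1 dW2 P Q \<in> CPfam (dV1 * dV2) (dW1 * dW2) Z"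
proof (rule CPfamI)
  let ?Z = "\<Union>y\<in>supp dW1 P. supp dW2 (Q y)"
  have QP: "Q y \<in> CPfam dV2 dW2 Z" if "y \<in> supp dW1 P" for y
    using Q CPfamD(2)[OF P] that by auto
  show Z: "finite ?Z" using CPfamD(1)[OF P] CPfamD(1)[OF QP] by auto
  show "supp (dW1 * dW2) (fam_tensor dV1 dV2 dW1 dW2 P Q) \<subseteq> ?Z" by (rule supp_fam_tensor)
  show "?Z \<subseteq> Z" using CPfamD(2)[OF QP] by auto
  show "is_CP (dV1 * dV2) (dW1 * dW2) (fam_tensor dV1 dV2 dW1 dW2 P Q z)" for z
    unfolding fam_tensor_def
    by (intro is_CP_superop_sum is_CP_tensor_superop CPfamD(3)[OF P] CPfamD(3)[OF QP])
  fix M :: "complex mat" assume M: "M \<in> carrier_mat (dV1 * dV2) (dV1 * dV2)"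
  have channel: "is_channel dV2 dW2 (superop_sum dW2 (Q y) ?Z)" if "y \<in> supp dW1 P" for y
  proof -
    have "supp dW2 (Q y) \<subseteq> ?Z" using that by auto
    with CPfamD(4)[OF QP[OF that]] show ?thesis by (simp only: superop_sum_supp[OF Z])
  qed
  have "(\<Sum>z\<in>?Z. mtrace (dW1 * dW2) (fam_tensor dV1 dV2 dW1 dW2 P Q z M)) =
      (\<Sum>y\<in>supp dW1 P. \<Sum>z\<in>?Z. mtrace (dW1 * dW2) (tensor_superop dV1 dV2 dW1 dW2 (P y) (Q y z) M))"
    unfolding fam_tensor_def mtrace_superop_sum by (rule sum.swap)
  also have "\<dots> = (\<Sum>y\<in>supp dW1 P.
      mtrace (dW1 * dW2) (tensor_superop dV1 dV2 dW1 dW2 (P y) (superop_sum dW2 (Q y) ?Z) M))"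
    by (simp add: tensor_superop_sum_right mtrace_superop_sum)
  also have "\<dots> = (\<Sum>y\<in>supp dW1 P. mtrace dW1 (P y (ptrace_right dV1 dV2 M)))"
    using channel is_CP_superop[OF CPfamD(3)[OF P]]
    by (intro sum.cong refl mtrace_tensor_superop_channel M)
  also have "\<dots> = mtrace dV1 (ptrace_right dV1 dV2 M)"
    by (rule CPfam_trace[OF P CPfamD(1)[OF P] subset_refl]) (simp add: ptrace_right_def)
  also have "\<dots> = mtrace (dV1 * dV2) M" by (rule mtrace_ptrace_right)
  finally show "(\<Sum>z\<in>?Z. mtrace (dW1 * dW2) (fam_tensor dV1 dV2 dW1 dW2 P Q z M)) = mtrace (dV1 * dV2) M" .
qed

lemma push_fam_tensor:
  fixes f :: "'y \<Rightarrow> 'y2" and g :: "'z \<Rightarrow> 'z2" and Qk :: "'y2 \<Rightarrow> 'z2 \<Rightarrow> superop"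
  assumes P: "P \<in> CPfam dV1 dW1 S" and Q: "\<And>y. y \<in> S \<Longrightarrow> Qn y \<in> CPfam dV2 dW2 Z"
    and natural: "\<And>y. y \<in> S \<Longrightarrow> Qk (f y) = push dW2 g (Qn y)"
  shows "fam_tensor dV1 dV2 dW1 dW2 (push dW1 f P) Qk = push (dW1 * dW2) g (fam_tensor dV1 dV2 dW1 dW2 P Qn)"
proof
  fix z :: 'z2
  let ?T = "tensor_superop dV1 dV2 dW1 dW2" and ?SP = "supp dW1 P"
  let ?Z = "\<Union>y\<in>?SP. supp dW2 (Qn y)"
  have QP: "Qn y \<in> CPfam dV2 dW2 Z" if "y \<in> ?SP" for y
    using Q CPfamD(2)[OF P] that by auto
  have SP: "finite ?SP" by (rule CPfamD(1)[OF P])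
  have Z: "finite ?Z" using SP CPfamD(1)[OF QP] by auto
  have "fam_tensor dV1 dV2 dW1 dW2 (push dW1 f P) Qk z =
      superop_sum (dW1 * dW2) (\<lambda>t. ?T (push dW1 f P t) (Qk t z)) (f ` ?SP)"
    unfolding fam_tensor_def using SP supp_push[of dW1 f P] not_in_supp[of _ dW1 "push dW1 f P"]
    by (intro superop_sum_mono_neutral) (auto simp: tensor_superop_zero_left)
  also have "\<dots> = superop_sum (dW1 * dW2)
      (\<lambda>t. superop_sum (dW1 * dW2) (\<lambda>s. ?T (P s) (Qk (f s) z)) {s \<in> ?SP. f s = t}) (f ` ?SP)"
    unfolding push_def tensor_superop_sum_left by (intro superop_sum_cong) auto
  also have "\<dots> = superop_sum (dW1 * dW2) (\<lambda>s. ?T (P s) (Qk (f s) z)) ?SP"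
    by (rule superop_sum_group[OF SP])
  also have "\<dots> = superop_sum (dW1 * dW2)
      (\<lambda>s. superop_sum (dW1 * dW2) (\<lambda>z'. ?T (P s) (Qn s z')) {z' \<in> ?Z. g z' = z}) ?SP"
  proof (rule superop_sum_cong)
    fix s assume s: "s \<in> ?SP"
    have "s \<in> S" using s CPfamD(2)[OF P] by blast
    then have "Qk (f s) z = push dW2 g (Qn s) z" by (simp add: natural)
    also have "\<dots> = superop_sum dW2 (Qn s) {z' \<in> ?Z. g z' = z}"
      using s by (intro push_eq_superop_sum[OF Z]) blast
    finally have "Qk (f s) z = superop_sum dW2 (Qn s) {z' \<in> ?Z. g z' = z}" .
    then show "?T (P s) (Qk (f s) z) = superop_sum (dW1 * dW2) (\<lambda>z'. ?T (P s) (Qn s z')) {z' \<in> ?Z. g z' = z}"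
      by (simp add: tensor_superop_sum_right)
  qed
  also have "\<dots> = superop_sum (dW1 * dW2) (fam_tensor dV1 dV2 dW1 dW2 P Qn) {z' \<in> ?Z. g z' = z}"
    unfolding fam_tensor_def by (rule superop_sum_swap)
  also have "\<dots> = push (dW1 * dW2) g (fam_tensor dV1 dV2 dW1 dW2 P Qn) z"
    by (rule push_eq_superop_sum[symmetric, OF Z supp_fam_tensor])
  finally show "fam_tensor dV1 dV2 dW1 dW2 (push dW1 f P) Qk z = push (dW1 * dW2) g (fam_tensor dV1 dV2 dW1 dW2 P Qn) z" .
qed

lemma bullet_comp_sset_map:
  assumes X: "sset Xs Xa" and \<Phi>: "sinstr dV1 dW1 Xs Xa Ys Ya \<Phi>" and \<Psi>: "sinstr dV2 dW2 Ys Ya Zs Za \<Psi>"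
  shows "sset_map Xs Xa (CP_s (dV1 * dV2) (dW1 * dW2) Zs) (CP_a (dW1 * dW2) Za)
    (bullet_comp dV1 dV2 dW1 dW2 Ys \<Phi> \<Psi>)"
proof -
  have bullet: "bullet_comp dV1 dV2 dW1 dW2 Ys \<Phi> \<Psi> n x = fam_tensor dV1 dV2 dW1 dW2 (\<Phi> n x) (\<Psi> n)"
    if "x \<in> Xs n" for n x
    by (rule bullet_comp_eq_fam_tensor) (rule sinstr_CPfam[OF \<Phi> that])
  show ?thesis
    unfolding sset_map_def
  proof (intro conjI allI impI)
    fix n x assume x: "x \<in> Xs n"
    show "bullet_comp dV1 dV2 dW1 dW2 Ys \<Phi> \<Psi> n x \<in> CP_s (dV1 * dV2) (dW1 * dW2) Zs n"
      unfolding bullet[OF x] CP_s_def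
      by (rule CPfam_fam_tensor[OF sinstr_CPfam[OF \<Phi> x] sinstr_CPfam[OF \<Psi>]])
  next
    fix k n \<theta> x assume \<theta>: "delta_mor k n \<theta>" and x: "x \<in> Xs n"
    have Xk: "Xa \<theta> k n x \<in> Xs k" using X \<theta> x unfolding sset_def by blast
    show "bullet_comp dV1 dV2 dW1 dW2 Ys \<Phi> \<Psi> k (Xa \<theta> k n x) =
        CP_a (dW1 * dW2) Za \<theta> k n (bullet_comp dV1 dV2 dW1 dW2 Ys \<Phi> \<Psi> n x)"
      unfolding bullet[OF x] bullet[OF Xk] CP_a_def sinstr_natural[OF \<Phi> \<theta> x]
      by (rule push_fam_tensor[where Z = "Zs n", OF sinstr_CPfam[OF \<Phi> x]])
        (simp_all add: sinstr_CPfam[OF \<Psi>] sinstr_natural[OF \<Psi> \<theta>])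
  qed
qed

theorem lemma6p4:
  fixes dV dW dU dV1 dV2 dW1 dW2 :: nat
  shows
  "(\<forall>(X1s :: nat \<Rightarrow> 'x1 set) X1a (X2s :: nat \<Rightarrow> 'x2 set) X2a
       (Y1s :: nat \<Rightarrow> 'y1 set) Y1a (Y2s :: nat \<Rightarrow> 'y2 set) Y2a \<Phi> \<Psi>.
      sset X1s X1a \<longrightarrow> sset X2s X2a \<longrightarrow> sset Y1s Y1a \<longrightarrow> sset Y2s Y2a \<longrightarrow>
      sinstr dV dW X1s X1a Y1s Y1a \<Phi> \<longrightarrow> sinstr dW dU X2s X2a Y2s Y2a \<Psi> \<longrightarrow>
      sset_map (prod_s X1s X2s) (prod_a X1a X2a)
        (CP_s dV dU (prod_s Y1s Y2s)) (CP_a dU (prod_a Y1a Y2a)) (seq_comp \<Phi> \<Psi>))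
   \<and>
   (\<forall>(Xs :: nat \<Rightarrow> 'x set) Xa (Ys :: nat \<Rightarrow> 'y set) Ya (Zs :: nat \<Rightarrow> 'z set) Za \<Phi> \<Psi>.
      sset Xs Xa \<longrightarrow> sset Ys Ya \<longrightarrow> sset Zs Za \<longrightarrow>
      sinstr dV1 dW1 Xs Xa Ys Ya \<Phi> \<longrightarrow> sinstr dV2 dW2 Ys Ya Zs Za \<Psi> \<longrightarrow>
      sset_map Xs Xa (CP_s (dV1 * dV2) (dW1 * dW2) Zs) (CP_a (dW1 * dW2) Za)
        (bullet_comp dV1 dV2 dW1 dW2 Ys \<Phi> \<Psi>))"
  by (intro conjI allI impI) (auto intro: seq_comp_sset_map bullet_comp_sset_map)

end
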